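(* Let $K\subset(-1,0)$ be compact. Then there exists an integer $N\ge 3$ such that for every $q\in K$ we have $\mathrm{S}(H_N;q)\neq 0$ and $\hat{y}_N(q)<-1$.
   Context: For a connected finite graph $G$, the all-terminal reliability polynomial is $\mathrm{Rel}(G;q)=\sum_{A}(1-q)^{|A|}q^{|E(G)|-|A|}$, summed over all $A\subseteq E(G)$ such that the spanning subgraph $(V(G),A)$ is connected. For a connected graph $H$ with two distinguished vertices $u,v$ (terminals), the split reliability polynomial is $\mathrm{S}(H;q)=\sum_{A}(1-q)^{|A|}q^{|E(H)|-|A|}$, summed over all $A\subseteq E(H)$ such that the spanning subgraph $(V(H),A)$ has exactly two connected components, one containing $u$ and the other containing $v$. The virtual edge interaction of $H$ is the rational function $\hat{y}_H(q)=\frac{\mathrm{Rel}(H;q)}{\mathrm{S}(H;q)}+1$. For $n\ge 3$, let $H_n=K_n\setminus e$ be the complete graph on $n$ vertices with one edge $e=uv$ removed, with terminals $u$ and $v$, and write $\hat{y}_n=\hat{y}_{H_n}$. *)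

theory Defs
  imports Complex_Main
begin

text \<open>Finite simple graphs: vertex set V, edge set E of 2-element subsets of V.
  A spanning subgraph is given by an edge subset A.\<close>

definition edge_rel :: "'a set set \<Rightarrow> ('a \<times> 'a) set" where
  "edge_rel A = {(x, y). {x, y} \<in> A}"

definition joined :: "'a set set \<Rightarrow> 'a \<Rightarrow> 'a \<Rightarrow> bool" where
  "joined A x y \<longleftrightarrow> (x, y) \<in> (edge_rel A)\<^sup>*"

definition spanning_connected :: "'a set \<Rightarrow> 'a set set \<Rightarrow> bool" where
  "spanning_connected V A \<longleftrightarrow> (\<forall>x\<in>V. \<forall>y\<in>V. joined A x y)"

text \<open>(V, A) has exactly two connected components, one containing u, the other v.\<close>
definition spanning_split :: "'a set \<Rightarrow> 'a set set \<Rightarrow> 'a \<Rightarrow> 'a \<Rightarrow> bool" where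
  "spanning_split V A u v \<longleftrightarrow> \<not> joined A u v \<and> (\<forall>x\<in>V. joined A u x \<or> joined A v x)"

definition Rel :: "'a set \<Rightarrow> 'a set set \<Rightarrow> real \<Rightarrow> real" where
  "Rel V E q = (\<Sum>A\<in>{A. A \<subseteq> E \<and> spanning_connected V A}.
      (1 - q) ^ card A * q ^ (card E - card A))"

definition SplitRel :: "'a set \<Rightarrow> 'a set set \<Rightarrow> 'a \<Rightarrow> 'a \<Rightarrow> real \<Rightarrow> real" where
  "SplitRel V E u v q = (\<Sum>A\<in>{A. A \<subseteq> E \<and> spanning_split V A u v}.
      (1 - q) ^ card A * q ^ (card E - card A))"

definition yhat :: "'a set \<Rightarrow> 'a set set \<Rightarrow> 'a \<Rightarrow> 'a \<Rightarrow> real \<Rightarrow> real" where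
  "yhat V E u v q = Rel V E q / SplitRel V E u v q + 1"

text \<open>H_n = K_n minus the edge {0,1}, on vertices {0..<n}, terminals u = 0, v = 1.\<close>
definition Hn_V :: "nat \<Rightarrow> nat set" where
  "Hn_V n = {0..<n}"

definition Hn_E :: "nat \<Rightarrow> nat set set" where
  "Hn_E n = {{i, j} | i j. i < j \<and> j < n \<and> \<not> (i = 0 \<and> j = 1)}"

definition S_H :: "nat \<Rightarrow> real \<Rightarrow> real" where
  "S_H n q = SplitRel (Hn_V n) (Hn_E n) 0 1 q"

definition yhat_H :: "nat \<Rightarrow> real \<Rightarrow> real" where
  "yhat_H n q = yhat (Hn_V n) (Hn_E n) 0 1 q"

end

(*
  Write R(W) for the all-terminal reliability of the complete graph on W at edge failure
  probability q. Grouping the spanning subgraphs by the component of a fixed vertex u gives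
  the recurrence  sum over u \<in> C \<subseteq> W of q^(|C| |W - C|) R(C) = 1.  If |q| \<le> s^2 with s < 1,
  every term with C \<noteq> W carries at least |W| - 1 failed cut edges, so R(W) = 1 + O(n^2 s^n)
  for n = |W|; by induction on |W| this yields a bound on R that is uniform in W and in q.
  The same grouping, applied to the split subgraphs of K_N, shows S(H_N) = q^(N-2) X with
  X close to 2 (the cuts isolating one terminal dominate), so S(H_N) is negative and small
  for odd N, while Rel(K_N) = Rel(H_N) + (1 - q) S(H_N) is close to 1. Hence
  yhat_N = Rel(K_N) / S(H_N) + q < -1 for all q \<in> K once N is large and odd.
*)
theory Submission
  imports Defs
begin

section \<open>Complete graphs, cuts and components\<close>

definition complete_edges :: "'a set \<Rightarrow> 'a set set" where
  "complete_edges W = {{i, j} | i j. i \<in> W \<and> j \<in> W \<and> i \<noteq> j}"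

definition cut_edges :: "'a set \<Rightarrow> 'a set \<Rightarrow> 'a set set" where
  "cut_edges C D = {{i, j} | i j. i \<in> C \<and> j \<in> D}"

definition edge_closed :: "'a set set \<Rightarrow> 'a set \<Rightarrow> bool" where
  "edge_closed A C \<longleftrightarrow> (\<forall>x y. {x, y} \<in> A \<longrightarrow> (x \<in> C \<longleftrightarrow> y \<in> C))"

definition component :: "'a set set \<Rightarrow> 'a \<Rightarrow> 'a set" where
  "component A u = {x. joined A u x}"

lemma complete_edges_subset_image: "complete_edges W \<subseteq> (\<lambda>(i, j). {i, j}) ` (W \<times> W)"
  unfolding complete_edges_def by auto

lemma finite_complete_edges: "finite W \<Longrightarrow> finite (complete_edges W)"
  using complete_edges_subset_image finite_subset by fastforce

lemma card_complete_edges_le: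
  assumes "finite W"
  shows "card (complete_edges W) \<le> card W ^ 2"
proof -
  have "card (complete_edges W) \<le> card ((\<lambda>(i, j). {i, j}) ` (W \<times> W))"
    using assms by (intro card_mono complete_edges_subset_image) auto
  also have "\<dots> \<le> card (W \<times> W)"
    by (rule card_image_le) (use assms in auto)
  finally show ?thesis by (simp add: card_cartesian_product power2_eq_square)
qed

lemma doubleton_in_complete_edges_iff: "{x, y} \<in> complete_edges W \<longleftrightarrow> x \<in> W \<and> y \<in> W \<and> x \<noteq> y"
  unfolding complete_edges_def by (auto simp: doubleton_eq_iff)

lemma cut_edges_eq_image: "cut_edges C D = (\<lambda>(i, j). {i, j}) ` (C \<times> D)"
  unfolding cut_edges_def by auto

lemma finite_cut_edges: "finite C \<Longrightarrow> finite D \<Longrightarrow> finite (cut_edges C D)"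
  unfolding cut_edges_eq_image by simp

lemma card_cut_edges:
  assumes "finite C" "finite D" "C \<inter> D = {}"
  shows "card (cut_edges C D) = card C * card D"
proof -
  have "inj_on (\<lambda>(i, j). {i, j}) (C \<times> D)"
    using assms(3) by (auto simp: inj_on_def doubleton_eq_iff)
  then show ?thesis unfolding cut_edges_eq_image by (simp add: card_image card_cartesian_product)
qed

lemma complete_edges_decompose:
  assumes "C \<subseteq> W"
  shows "complete_edges W = complete_edges C \<union> complete_edges (W - C) \<union> cut_edges C (W - C)"
  using assms unfolding complete_edges_def cut_edges_def by (auto simp: doubleton_eq_iff) blast+

lemma complete_edges_disjoint: "C \<inter> D = {} \<Longrightarrow> complete_edges C \<inter> complete_edges D = {}"
  unfolding complete_edges_def by (auto simp: doubleton_eq_iff)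

lemma complete_edges_cut_edges_disjoint:
  "C \<inter> D = {} \<Longrightarrow> complete_edges C \<inter> cut_edges C D = {}"
  "C \<inter> D = {} \<Longrightarrow> complete_edges D \<inter> cut_edges C D = {}"
  unfolding complete_edges_def cut_edges_def by (auto simp: doubleton_eq_iff)

lemma joined_refl [simp]: "joined A x x"
  unfolding joined_def by simp

lemma joined_trans: "joined A x y \<Longrightarrow> joined A y z \<Longrightarrow> joined A x z"
  unfolding joined_def by simp

lemma joined_edge: "joined A x y \<Longrightarrow> {y, z} \<in> A \<Longrightarrow> joined A x z"
  unfolding joined_def edge_rel_def by (simp add: rtrancl.rtrancl_into_rtrancl)

lemma joined_sym: "joined A x y \<Longrightarrow> joined A y x"
proof -
  have "sym (edge_rel A)"
    unfolding sym_def edge_rel_def by (auto simp: insert_commute)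
  then show "joined A x y \<Longrightarrow> joined A y x"
    unfolding joined_def by (metis rtrancl_converseI sym_conv_converse_eq)
qed

lemma joined_mono: "A \<subseteq> B \<Longrightarrow> joined A x y \<Longrightarrow> joined B x y"
  unfolding joined_def edge_rel_def by (erule rtrancl_mono[THEN subsetD, rotated]) auto

lemma edge_closed_complete_edges: "A \<subseteq> complete_edges W \<Longrightarrow> edge_closed A W"
  unfolding edge_closed_def by (auto dest: subsetD simp: doubleton_in_complete_edges_iff)

lemma edge_closed_Diff:
  "A \<subseteq> complete_edges W \<Longrightarrow> edge_closed A C \<Longrightarrow> edge_closed A (W - C)"
  using edge_closed_complete_edges unfolding edge_closed_def by blast

lemma edge_closed_iff_cut_edges:
  assumes A: "A \<subseteq> complete_edges W"
  shows "edge_closed A C \<longleftrightarrow> A \<inter> cut_edges C (W - C) = {}"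
proof
  assume "edge_closed A C"
  then show "A \<inter> cut_edges C (W - C) = {}"
    unfolding edge_closed_def cut_edges_def by blast
next
  assume no_cut: "A \<inter> cut_edges C (W - C) = {}"
  show "edge_closed A C"
    unfolding edge_closed_def
  proof (intro allI impI)
    fix x y assume xy: "{x, y} \<in> A"
    then have "x \<in> W" "y \<in> W"
      using A by (auto simp: doubleton_in_complete_edges_iff)
    moreover have "{x, y} \<notin> cut_edges C (W - C)" "{y, x} \<notin> cut_edges C (W - C)"
      using no_cut xy by (auto simp: insert_commute)
    ultimately show "x \<in> C \<longleftrightarrow> y \<in> C" unfolding cut_edges_def by blast
  qed
qed

lemma joined_edge_closed:
  assumes "edge_closed A C" "A \<subseteq> complete_edges W" "joined A x y" "x \<in> C"
  shows "y \<in> C \<and> joined (A \<inter> complete_edges C) x y"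
  using assms(3) unfolding joined_def
proof (induction rule: rtrancl_induct)
  case base
  then show ?case using assms(4) by simp
next
  case (step y z)
  then have yz: "{y, z} \<in> A" by (simp add: edge_rel_def)
  with step assms(1) have "z \<in> C" unfolding edge_closed_def by blast
  moreover have "y \<noteq> z"
    using assms(2) yz doubleton_in_complete_edges_iff[of y z W] by blast
  ultimately have "(y, z) \<in> edge_rel (A \<inter> complete_edges C)"
    using yz step by (simp add: edge_rel_def doubleton_in_complete_edges_iff)
  with step \<open>z \<in> C\<close> show ?case by (auto intro: rtrancl.rtrancl_into_rtrancl)
qed

lemma edge_closed_component: "edge_closed A (component A u)"
  unfolding edge_closed_def component_def
  by (metis insert_commute joined_edge mem_Collect_eq)

lemma component_subset:
  assumes "A \<subseteq> complete_edges W" "u \<in> W"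
  shows "component A u \<subseteq> W"
  using joined_edge_closed[OF edge_closed_complete_edges[OF assms(1)] assms(1) _ assms(2)]
  unfolding component_def by blast

lemma component_eq_iff:
  assumes "A \<subseteq> complete_edges W" "u \<in> W"
  shows "component A u = C \<longleftrightarrow> u \<in> C \<and> C \<subseteq> W \<and> A \<inter> cut_edges C (W - C) = {} \<and>
    spanning_connected C (A \<inter> complete_edges C)"
proof
  assume C: "component A u = C"
  have "spanning_connected C (A \<inter> complete_edges C)"
    unfolding spanning_connected_def
  proof (intro ballI)
    fix x y assume "x \<in> C" "y \<in> C"
    then have "joined A u x" "joined A u y" using C unfolding component_def by auto
    then have "joined A x y" by (blast intro: joined_trans[OF joined_sym])
    then show "joined (A \<inter> complete_edges C) x y"
      using joined_edge_closed[OF edge_closed_component assms(1)] C \<open>x \<in> C\<close> by blast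
  qed
  moreover have "C \<subseteq> W" using C component_subset[OF assms] by blast
  ultimately show "u \<in> C \<and> C \<subseteq> W \<and> A \<inter> cut_edges C (W - C) = {} \<and>
      spanning_connected C (A \<inter> complete_edges C)"
    using C edge_closed_component[of A u] edge_closed_iff_cut_edges[OF assms(1)]
    unfolding component_def by auto
next
  assume C: "u \<in> C \<and> C \<subseteq> W \<and> A \<inter> cut_edges C (W - C) = {} \<and>
      spanning_connected C (A \<inter> complete_edges C)"
  then have "edge_closed A C" using edge_closed_iff_cut_edges[OF assms(1)] by blast
  then have "component A u \<subseteq> C"
    using joined_edge_closed[OF _ assms(1)] C unfolding component_def by blast
  moreover have "C \<subseteq> component A u"
    using C joined_mono[of "A \<inter> complete_edges C" A]
    unfolding component_def spanning_connected_def by blast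
  ultimately show "component A u = C" by blast
qed

lemma spanning_split_iff_component:
  assumes A: "A \<subseteq> complete_edges V" and "u \<in> V" "v \<in> V" and C: "component A u = C"
  shows "spanning_split V A u v \<longleftrightarrow>
    v \<notin> C \<and> spanning_connected (V - C) (A \<inter> complete_edges (V - C))"
proof
  assume split: "spanning_split V A u v"
  then have "v \<notin> C" using C unfolding spanning_split_def component_def by blast
  have v_joined: "joined A v x" if "x \<in> V - C" for x
    using split that C unfolding spanning_split_def component_def by blast
  have closed: "edge_closed A (V - C)"
    using edge_closed_Diff[OF A, of C] edge_closed_component[of A u] C by simp
  have "spanning_connected (V - C) (A \<inter> complete_edges (V - C))"
    unfolding spanning_connected_def
  proof (intro ballI)
    fix x y assume "x \<in> V - C" "y \<in> V - C"
    then have "joined A x y" using joined_trans[OF joined_sym[OF v_joined] v_joined] by blast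
    then show "joined (A \<inter> complete_edges (V - C)) x y"
      using joined_edge_closed[OF closed A] \<open>x \<in> V - C\<close> by blast
  qed
  with \<open>v \<notin> C\<close> show "v \<notin> C \<and> spanning_connected (V - C) (A \<inter> complete_edges (V - C))" ..
next
  assume rest: "v \<notin> C \<and> spanning_connected (V - C) (A \<inter> complete_edges (V - C))"
  have "joined A v x" if "x \<in> V - C" for x
    using rest that \<open>v \<in> V\<close> joined_mono[of "A \<inter> complete_edges (V - C)" A]
    unfolding spanning_connected_def by blast
  then show "spanning_split V A u v"
    using rest C unfolding spanning_split_def component_def by blast
qed

lemma joined_insert_edge:
  assumes "joined (insert {u, v} A) u x"
  shows "joined A u x \<or> joined A v x"
  using assms unfolding joined_def
proof (induction rule: rtrancl_induct)
  case base
  then show ?case by simp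
next
  case (step y z)
  then have "{y, z} = {u, v} \<or> (y, z) \<in> edge_rel A" by (simp add: edge_rel_def)
  then show ?case
  proof
    assume "{y, z} = {u, v}"
    then have "z = u \<or> z = v" by (auto simp: doubleton_eq_iff)
    then show ?case by blast
  next
    assume "(y, z) \<in> edge_rel A"
    then show ?case using step.IH rtrancl.rtrancl_into_rtrancl[of _ y "edge_rel A" z] by blast
  qed
qed

lemma spanning_connected_if_joined_from:
  assumes "\<And>x. x \<in> V \<Longrightarrow> joined A w x"
  shows "spanning_connected V A"
  unfolding spanning_connected_def
proof (intro ballI)
  fix x y assume "x \<in> V" "y \<in> V"
  show "joined A x y" by (rule joined_trans[OF joined_sym[OF assms[OF \<open>x \<in> V\<close>]] assms[OF \<open>y \<in> V\<close>]])
qed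

lemma spanning_connected_insert_iff:
  assumes "u \<in> V" "v \<in> V"
  shows "spanning_connected V (insert {u, v} A) \<longleftrightarrow>
    spanning_connected V A \<or> spanning_split V A u v"
proof
  assume conn: "spanning_connected V (insert {u, v} A)"
  have from_uv: "joined A u x \<or> joined A v x" if "x \<in> V" for x
    using joined_insert_edge[of u v A x] conn assms(1) that unfolding spanning_connected_def by blast
  show "spanning_connected V A \<or> spanning_split V A u v"
  proof (cases "joined A u v")
    case True
    then have "joined A u x" if "x \<in> V" for x
      using from_uv[OF that] joined_trans[OF True] by blast
    then have "spanning_connected V A" by (rule spanning_connected_if_joined_from)
    then show ?thesis ..
  next
    case False
    then show ?thesis using from_uv unfolding spanning_split_def by blast
  qed
next
  let ?B = "insert {u, v} A"
  assume conn_or_split: "spanning_connected V A \<or> spanning_split V A u v"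
  have "joined ?B u x" if "x \<in> V" for x
  proof -
    have "joined ?B u v" using joined_edge[of ?B u u v] by simp
    moreover have "joined A u x \<or> joined A v x"
      using conn_or_split assms(1) that unfolding spanning_connected_def spanning_split_def by blast
    ultimately show ?thesis using joined_mono[of A ?B] joined_trans[of ?B u v x] by blast
  qed
  then show "spanning_connected V ?B" by (rule spanning_connected_if_joined_from)
qed

section \<open>Probabilities of random spanning subgraphs\<close>

text \<open>Each edge of \<open>E\<close> fails independently with probability \<open>q\<close>; \<open>subgraph_prob q E P\<close> is
  the probability that the surviving edge set satisfies \<open>P\<close>. The identities below are
  polynomial identities in \<open>q\<close>, so they hold for every real \<open>q\<close>.\<close>

definition subgraph_weight :: "real \<Rightarrow> 'a set set \<Rightarrow> 'a set set \<Rightarrow> real" where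
  "subgraph_weight q E A = (1 - q) ^ card A * q ^ card (E - A)"

definition subgraph_prob :: "real \<Rightarrow> 'a set set \<Rightarrow> ('a set set \<Rightarrow> bool) \<Rightarrow> real" where
  "subgraph_prob q E P = (\<Sum>A | A \<subseteq> E \<and> P A. subgraph_weight q E A)"

lemma finite_subsets_with: "finite E \<Longrightarrow> finite {A. A \<subseteq> E \<and> P A}"
  by (rule finite_subset[of _ "Pow E"]) auto

lemma sum_Pow_power_card:
  fixes a b :: "'b :: comm_semiring_1"
  assumes "finite E"
  shows "(\<Sum>A\<in>Pow E. a ^ card A * b ^ card (E - A)) = (a + b) ^ card E"
  using prod_add[OF assms, of "\<lambda>_. a" "\<lambda>_. b"] by simp

lemma subgraph_prob_True: "finite E \<Longrightarrow> subgraph_prob q E (\<lambda>_. True) = 1"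
  unfolding subgraph_prob_def subgraph_weight_def
  using sum_Pow_power_card[of E "1 - q" q] by (simp add: Pow_def)

lemma abs_subgraph_prob_le:
  assumes "finite E"
  shows "\<bar>subgraph_prob q E P\<bar> \<le> (\<bar>1 - q\<bar> + \<bar>q\<bar>) ^ card E"
proof -
  have "\<bar>subgraph_prob q E P\<bar> \<le> (\<Sum>A | A \<subseteq> E \<and> P A. \<bar>subgraph_weight q E A\<bar>)"
    unfolding subgraph_prob_def by (rule sum_abs)
  also have "\<dots> \<le> (\<Sum>A\<in>Pow E. \<bar>subgraph_weight q E A\<bar>)"
    by (rule sum_mono2) (use assms in auto)
  also have "\<dots> = (\<bar>1 - q\<bar> + \<bar>q\<bar>) ^ card E"
    unfolding subgraph_weight_def abs_mult power_abs by (rule sum_Pow_power_card[OF assms])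
  finally show ?thesis .
qed

lemma subgraph_prob_cong:
  "(\<And>A. A \<subseteq> E \<Longrightarrow> P A \<longleftrightarrow> Q A) \<Longrightarrow> subgraph_prob q E P = subgraph_prob q E Q"
  unfolding subgraph_prob_def by (rule sum.cong) auto

lemma subgraph_prob_none: "subgraph_prob q E (\<lambda>A. A = {}) = q ^ card E"
proof -
  have "{A. A \<subseteq> E \<and> A = {}} = {{}}" by auto
  then show ?thesis unfolding subgraph_prob_def subgraph_weight_def by simp
qed

lemma subgraph_prob_disj:
  assumes "finite E" and "\<And>A. A \<subseteq> E \<Longrightarrow> \<not> (P A \<and> Q A)"
  shows "subgraph_prob q E (\<lambda>A. P A \<or> Q A) = subgraph_prob q E P + subgraph_prob q E Q"
proof -
  have "{A. A \<subseteq> E \<and> (P A \<or> Q A)} = {A. A \<subseteq> E \<and> P A} \<union> {A. A \<subseteq> E \<and> Q A}" by auto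
  moreover have "{A. A \<subseteq> E \<and> P A} \<inter> {A. A \<subseteq> E \<and> Q A} = {}" using assms(2) by auto
  ultimately show ?thesis
    unfolding subgraph_prob_def using assms(1) by (simp add: sum.union_disjoint finite_subsets_with)
qed

lemma subgraph_prob_group:
  assumes "finite E" "finite T" "\<And>A. A \<subseteq> E \<Longrightarrow> P A \<Longrightarrow> f A \<in> T"
  shows "subgraph_prob q E P = (\<Sum>c\<in>T. subgraph_prob q E (\<lambda>A. P A \<and> f A = c))"
proof -
  have "f ` {A. A \<subseteq> E \<and> P A} \<subseteq> T" using assms(3) by blast
  from sum.group[OF finite_subsets_with[OF assms(1)] assms(2) this, of "subgraph_weight q E"]
  show ?thesis unfolding subgraph_prob_def by (simp add: conj_assoc)
qed

lemma subgraph_weight_Un: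
  assumes "finite E1" "finite E2" "E1 \<inter> E2 = {}" "A1 \<subseteq> E1" "A2 \<subseteq> E2"
  shows "subgraph_weight q (E1 \<union> E2) (A1 \<union> A2) = subgraph_weight q E1 A1 * subgraph_weight q E2 A2"
proof -
  have "finite A1" "finite A2" using assms finite_subset by blast+
  then have "card (A1 \<union> A2) = card A1 + card A2"
    using assms by (intro card_Un_disjoint) auto
  moreover have "card (E1 \<union> E2 - (A1 \<union> A2)) = card (E1 - A1) + card (E2 - A2)"
  proof -
    have "E1 \<union> E2 - (A1 \<union> A2) = (E1 - A1) \<union> (E2 - A2)" using assms by auto
    then show ?thesis using assms by (simp add: card_Un_disjoint disjoint_iff)
  qed
  ultimately show ?thesis unfolding subgraph_weight_def by (simp add: power_add algebra_simps)
qed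

lemma subgraph_prob_Un:
  assumes fin: "finite E1" "finite E2" and disj: "E1 \<inter> E2 = {}"
  shows "subgraph_prob q (E1 \<union> E2) (\<lambda>A. P1 (A \<inter> E1) \<and> P2 (A \<inter> E2))
    = subgraph_prob q E1 P1 * subgraph_prob q E2 P2"
proof -
  let ?S1 = "{A. A \<subseteq> E1 \<and> P1 A}" and ?S2 = "{A. A \<subseteq> E2 \<and> P2 A}"
  let ?union = "\<lambda>(A1, A2). A1 \<union> A2"
  have inj: "inj_on ?union (?S1 \<times> ?S2)"
  proof (rule inj_onI)
    fix x y assume "x \<in> ?S1 \<times> ?S2" "y \<in> ?S1 \<times> ?S2" "?union x = ?union y"
    then show "x = y"
      using disj by (cases x, cases y) (simp, blast)
  qed
  have image: "{A. A \<subseteq> E1 \<union> E2 \<and> P1 (A \<inter> E1) \<and> P2 (A \<inter> E2)} = ?union ` (?S1 \<times> ?S2)"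
  proof (rule set_eqI, rule iffI)
    fix A assume "A \<in> {A. A \<subseteq> E1 \<union> E2 \<and> P1 (A \<inter> E1) \<and> P2 (A \<inter> E2)}"
    then have "A = ?union (A \<inter> E1, A \<inter> E2)" "(A \<inter> E1, A \<inter> E2) \<in> ?S1 \<times> ?S2" by auto
    then show "A \<in> ?union ` (?S1 \<times> ?S2)" by blast
  next
    fix A assume "A \<in> ?union ` (?S1 \<times> ?S2)"
    then obtain A1 A2 where "A = A1 \<union> A2" "A1 \<subseteq> E1" "A2 \<subseteq> E2" "P1 A1" "P2 A2" by auto
    moreover from this have "A \<inter> E1 = A1" "A \<inter> E2 = A2" using disj by blast+
    ultimately show "A \<in> {A. A \<subseteq> E1 \<union> E2 \<and> P1 (A \<inter> E1) \<and> P2 (A \<inter> E2)}" by auto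
  qed
  have "subgraph_prob q (E1 \<union> E2) (\<lambda>A. P1 (A \<inter> E1) \<and> P2 (A \<inter> E2))
      = (\<Sum>(A1, A2)\<in>?S1 \<times> ?S2. subgraph_weight q (E1 \<union> E2) (A1 \<union> A2))"
    unfolding subgraph_prob_def image sum.reindex[OF inj] by (simp add: case_prod_beta)
  also have "\<dots> = (\<Sum>(A1, A2)\<in>?S1 \<times> ?S2. subgraph_weight q E1 A1 * subgraph_weight q E2 A2)"
    by (rule sum.cong) (auto intro: subgraph_weight_Un[OF fin disj])
  also have "\<dots> = subgraph_prob q E1 P1 * subgraph_prob q E2 P2"
    unfolding subgraph_prob_def sum_product sum.cartesian_product by simp
  finally show ?thesis .
qed

lemma subgraph_prob_insert:
  assumes fin: "finite E" and e: "e \<notin> E"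
  shows "subgraph_prob q (insert e E) P
    = q * subgraph_prob q E P + (1 - q) * subgraph_prob q E (\<lambda>A. P (insert e A))"
proof -
  let ?S1 = "{A. A \<subseteq> E \<and> P A}" and ?S2 = "{A. A \<subseteq> E \<and> P (insert e A)}"
  have split: "{A. A \<subseteq> insert e E \<and> P A} = ?S1 \<union> insert e ` ?S2"
  proof (rule set_eqI, rule iffI)
    fix A assume A: "A \<in> {A. A \<subseteq> insert e E \<and> P A}"
    show "A \<in> ?S1 \<union> insert e ` ?S2"
    proof (cases "e \<in> A")
      case True
      then have "A = insert e (A - {e})" "A - {e} \<in> ?S2" using A by (auto simp: insert_absorb)
      then show ?thesis by blast
    qed (use A in auto)
  qed auto
  have disj: "?S1 \<inter> insert e ` ?S2 = {}" using e by auto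
  have inj: "inj_on (insert e) ?S2"
    using e by (intro inj_onI) (metis Diff_insert_absorb mem_Collect_eq subsetD)
  have weight_out: "subgraph_weight q (insert e E) A = q * subgraph_weight q E A" if "A \<subseteq> E" for A
  proof -
    have "insert e E - A = insert e (E - A)" using that e by auto
    then show ?thesis unfolding subgraph_weight_def using fin e by simp
  qed
  have weight_in: "subgraph_weight q (insert e E) (insert e A) = (1 - q) * subgraph_weight q E A"
    if "A \<subseteq> E" for A
  proof -
    have "insert e E - insert e A = E - A" "e \<notin> A" "finite A"
      using that e fin finite_subset by auto
    then show ?thesis unfolding subgraph_weight_def by simp
  qed
  have "subgraph_prob q (insert e E) P
      = (\<Sum>A\<in>?S1. subgraph_weight q (insert e E) A)
        + (\<Sum>A\<in>?S2. subgraph_weight q (insert e E) (insert e A))"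
    unfolding subgraph_prob_def split using fin
    by (simp add: sum.union_disjoint[OF _ _ disj] finite_subsets_with sum.reindex[OF inj])
  also have "\<dots> = q * subgraph_prob q E P + (1 - q) * subgraph_prob q E (\<lambda>A. P (insert e A))"
    unfolding subgraph_prob_def sum_distrib_left by (simp add: weight_out weight_in)
  finally show ?thesis .
qed

lemma Rel_eq_subgraph_prob: "finite E \<Longrightarrow> Rel V E q = subgraph_prob q E (spanning_connected V)"
  unfolding Rel_def subgraph_prob_def subgraph_weight_def
  by (rule sum.cong) (auto simp: card_Diff_subset finite_subset)

lemma SplitRel_eq_subgraph_prob:
  "finite E \<Longrightarrow> SplitRel V E u v q = subgraph_prob q E (\<lambda>A. spanning_split V A u v)"
  unfolding SplitRel_def subgraph_prob_def subgraph_weight_def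
  by (rule sum.cong) (auto simp: card_Diff_subset finite_subset)

section \<open>Reliability of complete graphs\<close>

definition rel_complete :: "real \<Rightarrow> 'a set \<Rightarrow> real" where
  "rel_complete q W = subgraph_prob q (complete_edges W) (spanning_connected W)"

lemma rel_complete_singleton [simp]: "rel_complete q {u} = 1"
proof -
  have "complete_edges {u} = {}" unfolding complete_edges_def by auto
  moreover have "{A. A \<subseteq> {} \<and> spanning_connected {u} A} = {{}}"
    unfolding spanning_connected_def by auto
  ultimately show ?thesis
    unfolding rel_complete_def subgraph_prob_def subgraph_weight_def by simp
qed

lemma abs_rel_complete_le:
  assumes "finite W" "\<bar>q\<bar> \<le> 1"
  shows "\<bar>rel_complete q W\<bar> \<le> 3 ^ (card W ^ 2)"
proof -
  have "\<bar>rel_complete q W\<bar> \<le> (\<bar>1 - q\<bar> + \<bar>q\<bar>) ^ card (complete_edges W)"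
    unfolding rel_complete_def by (rule abs_subgraph_prob_le[OF finite_complete_edges[OF assms(1)]])
  also have "\<dots> \<le> 3 ^ card (complete_edges W)"
    by (rule power_mono) (use assms(2) in auto)
  also have "\<dots> \<le> 3 ^ (card W ^ 2)"
    by (rule power_increasing[OF card_complete_edges_le[OF assms(1)]]) simp
  finally show ?thesis .
qed

text \<open>The component of \<open>u\<close> is \<open>C\<close> iff \<open>C\<close> is internally connected and all edges of the cut
  around \<open>C\<close> fail; these events involve disjoint edge sets.\<close>
lemma subgraph_prob_component:
  assumes W: "finite W" and C: "u \<in> C" "C \<subseteq> W"
  shows "subgraph_prob q (complete_edges W)
      (\<lambda>A. component A u = C \<and> P (A \<inter> complete_edges (W - C)))
    = q ^ (card C * card (W - C)) * rel_complete q C * subgraph_prob q (complete_edges (W - C)) P"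
proof -
  let ?E1 = "complete_edges C" and ?E2 = "complete_edges (W - C)" and ?E3 = "cut_edges C (W - C)"
  have fin: "finite ?E1" "finite ?E2" "finite ?E3"
    using W C finite_subset by (auto intro!: finite_complete_edges finite_cut_edges)
  have disj: "?E1 \<inter> (?E2 \<union> ?E3) = {}" "?E2 \<inter> ?E3 = {}"
    using complete_edges_disjoint[of C "W - C"] complete_edges_cut_edges_disjoint[of C "W - C"]
    by auto
  have W_split: "complete_edges W = ?E1 \<union> (?E2 \<union> ?E3)"
    using complete_edges_decompose[OF C(2)] by auto
  have "subgraph_prob q (complete_edges W) (\<lambda>A. component A u = C \<and> P (A \<inter> ?E2))
    = subgraph_prob q (?E1 \<union> (?E2 \<union> ?E3)) (\<lambda>A. spanning_connected C (A \<inter> ?E1) \<and>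
        (\<lambda>B. P (B \<inter> ?E2) \<and> B \<inter> ?E3 = {}) (A \<inter> (?E2 \<union> ?E3)))"
    unfolding W_split
  proof (rule subgraph_prob_cong)
    fix A assume "A \<subseteq> ?E1 \<union> (?E2 \<union> ?E3)"
    then have "A \<subseteq> complete_edges W" "A \<inter> (?E2 \<union> ?E3) \<inter> ?E2 = A \<inter> ?E2"
      "A \<inter> (?E2 \<union> ?E3) \<inter> ?E3 = A \<inter> ?E3"
      using W_split disj by auto
    then show "(component A u = C \<and> P (A \<inter> ?E2)) \<longleftrightarrow> spanning_connected C (A \<inter> ?E1) \<and>
        (\<lambda>B. P (B \<inter> ?E2) \<and> B \<inter> ?E3 = {}) (A \<inter> (?E2 \<union> ?E3))"
      using component_eq_iff[of A W u C] C by auto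
  qed
  also have "\<dots> = rel_complete q C *
      subgraph_prob q (?E2 \<union> ?E3) (\<lambda>B. P (B \<inter> ?E2) \<and> (\<lambda>B. B = {}) (B \<inter> ?E3))"
    unfolding rel_complete_def by (rule subgraph_prob_Un[OF fin(1) finite_UnI[OF fin(2,3)] disj(1)])
  also have "\<dots> = rel_complete q C * (subgraph_prob q ?E2 P * q ^ card ?E3)"
    using subgraph_prob_Un[OF fin(2,3) disj(2), of q P "\<lambda>B. B = {}"] by (simp add: subgraph_prob_none)
  also have "card ?E3 = card C * card (W - C)"
    using W C finite_subset by (intro card_cut_edges) auto
  finally show ?thesis by (simp add: algebra_simps)
qed

text \<open>Grouping the subgraphs of \<open>K\<^sub>W\<close> by the component of \<open>u\<close>.\<close>
lemma rel_complete_recurrence: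
  assumes W: "finite W" and u: "u \<in> W"
  shows "(\<Sum>C | u \<in> C \<and> C \<subseteq> W. q ^ (card C * card (W - C)) * rel_complete q C) = 1"
proof -
  let ?T = "{C. u \<in> C \<and> C \<subseteq> W}"
  have "1 = subgraph_prob q (complete_edges W) (\<lambda>_. True)"
    by (simp add: subgraph_prob_True finite_complete_edges[OF W])
  also have "\<dots> = (\<Sum>C\<in>?T. subgraph_prob q (complete_edges W) (\<lambda>A. True \<and> component A u = C))"
    using W u component_subset[of _ W u]
    by (intro subgraph_prob_group) (auto simp: finite_complete_edges component_def)
  also have "\<dots> = (\<Sum>C\<in>?T. q ^ (card C * card (W - C)) * rel_complete q C)"
    using subgraph_prob_component[OF W, of u _ q "\<lambda>_. True"] W
    by (intro sum.cong) (auto simp: subgraph_prob_True finite_complete_edges)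
  finally show ?thesis by simp
qed

lemma subgraph_prob_spanning_split:
  assumes V: "finite V" and uv: "u \<in> V" "v \<in> V"
  shows "subgraph_prob q (complete_edges V) (\<lambda>A. spanning_split V A u v)
    = (\<Sum>C | u \<in> C \<and> C \<subseteq> V \<and> v \<notin> C.
        q ^ (card C * card (V - C)) * rel_complete q C * rel_complete q (V - C))"
proof -
  let ?T = "{C. u \<in> C \<and> C \<subseteq> V \<and> v \<notin> C}"
  have "subgraph_prob q (complete_edges V) (\<lambda>A. spanning_split V A u v)
    = (\<Sum>C\<in>?T. subgraph_prob q (complete_edges V)
        (\<lambda>A. spanning_split V A u v \<and> component A u = C))"
    using V uv component_subset[of _ V u] spanning_split_iff_component[OF _ uv]
    by (intro subgraph_prob_group) (auto simp: finite_complete_edges component_def)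
  also have "\<dots> = (\<Sum>C\<in>?T. subgraph_prob q (complete_edges V)
        (\<lambda>A. component A u = C \<and> spanning_connected (V - C) (A \<inter> complete_edges (V - C))))"
    using spanning_split_iff_component[OF _ uv]
    by (intro sum.cong refl subgraph_prob_cong) blast
  also have "\<dots> = (\<Sum>C\<in>?T.
      q ^ (card C * card (V - C)) * rel_complete q C * rel_complete q (V - C))"
    using subgraph_prob_component[OF V] unfolding rel_complete_def by (intro sum.cong) auto
  finally show ?thesis .
qed

lemma rel_complete_delete_edge:
  assumes V: "finite V" and uv: "u \<in> V" "v \<in> V" "u \<noteq> v"
  defines "H \<equiv> complete_edges V - {{u, v}}"
  shows "rel_complete q V = Rel V H q + (1 - q) * SplitRel V H u v q"
proof -
  have H: "finite H" "{u, v} \<notin> H" "complete_edges V = insert {u, v} H"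
    using finite_complete_edges[OF V] uv by (auto simp: H_def doubleton_in_complete_edges_iff)
  have "rel_complete q V = q * subgraph_prob q H (spanning_connected V)
      + (1 - q) * subgraph_prob q H (\<lambda>A. spanning_connected V A \<or> spanning_split V A u v)"
    unfolding rel_complete_def H(3) subgraph_prob_insert[OF H(1,2)]
    by (simp add: spanning_connected_insert_iff[OF uv(1,2)])
  also have "subgraph_prob q H (\<lambda>A. spanning_connected V A \<or> spanning_split V A u v)
      = subgraph_prob q H (spanning_connected V) + subgraph_prob q H (\<lambda>A. spanning_split V A u v)"
    using uv by (intro subgraph_prob_disj[OF H(1)])
      (auto simp: spanning_connected_def spanning_split_def)
  finally show ?thesis
    using H(1) by (simp add: Rel_eq_subgraph_prob SplitRel_eq_subgraph_prob algebra_simps)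
qed

text \<open>Adding the edge \<open>uv\<close> to a split subgraph joins \<open>u\<close> and \<open>v\<close>, so only the subgraphs
  avoiding \<open>uv\<close> contribute, each with the extra factor \<open>q\<close>.\<close>
lemma SplitRel_delete_edge:
  assumes V: "finite V" and uv: "u \<in> V" "v \<in> V" "u \<noteq> v"
  defines "H \<equiv> complete_edges V - {{u, v}}"
  shows "q * SplitRel V H u v q = subgraph_prob q (complete_edges V) (\<lambda>A. spanning_split V A u v)"
proof -
  have H: "finite H" "{u, v} \<notin> H" "complete_edges V = insert {u, v} H"
    using finite_complete_edges[OF V] uv by (auto simp: H_def doubleton_in_complete_edges_iff)
  have "subgraph_prob q H (\<lambda>A. spanning_split V (insert {u, v} A) u v)
      = subgraph_prob q H (\<lambda>_. False)"
    using joined_edge[of _ u u v] by (intro subgraph_prob_cong) (simp add: spanning_split_def)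
  then show ?thesis
    unfolding H(3) subgraph_prob_insert[OF H(1,2)]
    by (simp add: SplitRel_eq_subgraph_prob[OF H(1)] subgraph_prob_def)
qed

lemma subgraph_prob_spanning_split_terminals:
  assumes W: "finite W" and uv: "u \<notin> W" "v \<notin> W" "u \<noteq> v"
  defines "V \<equiv> insert u (insert v W)"
  shows "subgraph_prob q (complete_edges V) (\<lambda>A. spanning_split V A u v)
    = (\<Sum>D\<in>Pow W. q ^ ((card D + 1) * (card (W - D) + 1))
        * rel_complete q (insert u D) * rel_complete q (insert v (W - D)))"
proof -
  have cuts: "{C. u \<in> C \<and> C \<subseteq> V \<and> v \<notin> C} = insert u ` Pow W"
    using uv unfolding V_def by (auto intro!: image_eqI[of _ _ "_ - {u}"])
  have inj: "inj_on (insert u) (Pow W)"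
    using uv by (intro inj_onI) (metis Diff_insert_absorb PowD subsetD)
  have cut_term: "q ^ (card (insert u D) * card (V - insert u D)) * rel_complete q (insert u D)
      * rel_complete q (V - insert u D) = q ^ ((card D + 1) * (card (W - D) + 1))
      * rel_complete q (insert u D) * rel_complete q (insert v (W - D))"
    if "D \<in> Pow W" for D
  proof -
    have "finite D" "u \<notin> D" using that W uv finite_subset by auto
    then have "card (insert u D) = card D + 1" "card (insert v (W - D)) = card (W - D) + 1"
      using uv W by simp_all
    moreover have "V - insert u D = insert v (W - D)" using that uv unfolding V_def by auto
    ultimately show ?thesis by simp
  qed
  have "subgraph_prob q (complete_edges V) (\<lambda>A. spanning_split V A u v)
      = (\<Sum>C\<in>insert u ` Pow W. q ^ (card C * card (V - C)) * rel_complete q C * rel_complete q (V - C))"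
    using subgraph_prob_spanning_split[of V u v q] W unfolding V_def cuts[unfolded V_def] by simp
  also have "\<dots> = (\<Sum>D\<in>Pow W. q ^ ((card D + 1) * (card (W - D) + 1))
      * rel_complete q (insert u D) * rel_complete q (insert v (W - D)))"
    by (rule sum.reindex_cong[OF inj refl]) (rule cut_term)
  finally show ?thesis .
qed

text \<open>Every split cut \<open>D \<union> {u}\<close> versus \<open>(W - D) \<union> {v}\<close> has at least \<open>card W + 1\<close> edges; this
  factor is pulled out. The cuts isolating \<open>u\<close> or \<open>v\<close> give the two leading terms.\<close>
definition split_cofactor :: "real \<Rightarrow> 'a \<Rightarrow> 'a \<Rightarrow> 'a set \<Rightarrow> real" where
  "split_cofactor q u v W = rel_complete q (insert v W) + rel_complete q (insert u W)
    + (\<Sum>D | D \<subseteq> W \<and> D \<noteq> {} \<and> D \<noteq> W.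
        q ^ (card D * card (W - D)) * rel_complete q (insert u D) * rel_complete q (insert v (W - D)))"

lemma subgraph_prob_spanning_split_cofactor:
  assumes W: "finite W" "W \<noteq> {}" and uv: "u \<notin> W" "v \<notin> W" "u \<noteq> v"
  defines "V \<equiv> insert u (insert v W)"
  shows "subgraph_prob q (complete_edges V) (\<lambda>A. spanning_split V A u v)
    = q ^ (card W + 1) * split_cofactor q u v W"
proof -
  let ?P = "{D. D \<subseteq> W \<and> D \<noteq> {} \<and> D \<noteq> W}"
  define g where "g D = q ^ ((card D + 1) * (card (W - D) + 1))
    * rel_complete q (insert u D) * rel_complete q (insert v (W - D))" for D
  have g_proper: "g D = q ^ (card W + 1) *
      (q ^ (card D * card (W - D)) * rel_complete q (insert u D) * rel_complete q (insert v (W - D)))"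
    if "D \<in> ?P" for D
  proof -
    have "card D + card (W - D) = card W"
      using that W by (metis card_Diff_subset finite_subset le_add_diff_inverse card_mono mem_Collect_eq)
    then have exponent: "(card D + 1) * (card (W - D) + 1) = (card W + 1) + card D * card (W - D)"
      by (simp add: algebra_simps)
    show ?thesis unfolding g_def exponent power_add by (simp only: mult.assoc)
  qed
  have "Pow W = insert {} (insert W ?P)" "W \<notin> ?P" "{} \<notin> insert W ?P" "finite ?P"
    using W by auto
  then have "subgraph_prob q (complete_edges V) (\<lambda>A. spanning_split V A u v)
      = g {} + g W + (\<Sum>D\<in>?P. g D)"
    unfolding V_def subgraph_prob_spanning_split_terminals[OF W(1) uv] g_def[symmetric]
    by (simp add: add.assoc)
  also have "\<dots> = q ^ (card W + 1) * split_cofactor q u v W"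
  proof -
    have "g {} = q ^ (card W + 1) * rel_complete q (insert v W)"
      "g W = q ^ (card W + 1) * rel_complete q (insert u W)"
      by (simp_all add: g_def)
    moreover have "(\<Sum>D\<in>?P. g D) = (\<Sum>D\<in>?P. q ^ (card W + 1) * (q ^ (card D * card (W - D))
        * rel_complete q (insert u D) * rel_complete q (insert v (W - D))))"
      by (rule sum.cong[OF refl g_proper])
    ultimately show ?thesis
      unfolding split_cofactor_def distrib_left sum_distrib_left by simp
  qed
  finally show ?thesis .
qed

section \<open>Estimates for small \<open>|q|\<close>\<close>

text \<open>With \<open>m = min k (n - k)\<close>, the binomial coefficient is at most \<open>n ^ m\<close> and the cut has at
  least \<open>m * n / 2\<close> edges, so the term is at most \<open>(n * s ^ n) ^ m\<close>.\<close>
lemma binomial_times_cut_power_le: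
  fixes s :: real
  assumes s: "0 \<le> s" "s \<le> 1" and k: "1 \<le> k" "k < n" and ns: "real n * s ^ n \<le> 1"
  shows "real (n choose k) * (s ^ 2) ^ (k * (n - k)) \<le> real n * s ^ n"
proof -
  define m where "m = min k (n - k)"
  have m: "1 \<le> m" "m \<le> n" using k unfolding m_def by auto
  have "n choose k = n choose m"
    unfolding m_def using k binomial_symmetric[of k n] by (auto simp: min_def)
  then have binom: "real (n choose k) \<le> real n ^ m"
    using binomial_le_pow[OF m(2)] by (metis of_nat_le_iff of_nat_power)
  have "m * n \<le> 2 * (k * (n - k))"
  proof (cases "k \<le> n - k")
    case True
    then have "m = k" "n \<le> 2 * (n - k)" unfolding m_def by auto
    then show ?thesis by (metis mult.left_commute mult_le_mono2)
  next
    case False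
    then have "m = n - k" "n \<le> 2 * k" unfolding m_def by auto
    then show ?thesis by (metis mult.left_commute mult_le_mono2 mult.commute)
  qed
  then have cut: "(s ^ 2) ^ (k * (n - k)) \<le> s ^ (m * n)"
    unfolding power_mult[symmetric] by (rule power_decreasing[OF _ s])
  have "real (n choose k) * (s ^ 2) ^ (k * (n - k)) \<le> real n ^ m * s ^ (m * n)"
    by (rule mult_mono[OF binom cut]) (use s in simp_all)
  also have "\<dots> = (real n * s ^ n) ^ m"
    by (simp add: power_mult_distrib power_mult[symmetric] mult.commute)
  also have "\<dots> \<le> real n * s ^ n"
    using power_decreasing[OF m(1), of "real n * s ^ n"] ns s by simp
  finally show ?thesis .
qed

lemma sum_proper_subsets_card:
  fixes f :: "nat \<Rightarrow> real"
  assumes W: "finite W"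
  shows "(\<Sum>D | D \<subseteq> W \<and> D \<noteq> {} \<and> D \<noteq> W. f (card D))
    = (\<Sum>k = 1..<card W. real (card W choose k) * f k)"
proof -
  let ?P = "{D. D \<subseteq> W \<and> D \<noteq> {} \<and> D \<noteq> W}"
  have "card ` ?P \<subseteq> {1..<card W}"
  proof
    fix k assume "k \<in> card ` ?P"
    then obtain D where D: "D \<subseteq> W" "D \<noteq> {}" "D \<noteq> W" "k = card D" by blast
    then have "D \<subset> W" "finite D" using W finite_subset by auto
    then have "0 < k" "k < card W"
      using D W psubset_card_mono by (auto simp: card_gt_0_iff)
    then show "k \<in> {1..<card W}" by simp
  qed
  then have "(\<Sum>D\<in>?P. f (card D)) = (\<Sum>k = 1..<card W. \<Sum>D | D \<in> ?P \<and> card D = k. f (card D))"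
    using W by (intro sum.group[symmetric]) (auto intro: finite_subset[of _ "Pow W"])
  also have "\<dots> = (\<Sum>k = 1..<card W. real (card W choose k) * f k)"
  proof (rule sum.cong[OF refl])
    fix k assume "k \<in> {1..<card W}"
    then have "{D. D \<in> ?P \<and> card D = k} = {D. D \<subseteq> W \<and> card D = k}" by auto
    then show "(\<Sum>D | D \<in> ?P \<and> card D = k. f (card D)) = real (card W choose k) * f k"
      using n_subsets[OF W, of k] by simp
  qed
  finally show ?thesis .
qed

lemma times_power_le_square_times_power:
  fixes s :: real
  assumes "0 \<le> s"
  shows "real n * s ^ n \<le> real n ^ 2 * s ^ n"
  using assms le_square[of n] by (intro mult_right_mono) (simp_all add: power2_eq_square flip: of_nat_mult)

lemma cut_power_sum_le:
  fixes s :: real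
  assumes W: "finite W" and s: "0 \<le> s" "s \<le> 1" and small: "real (card W) ^ 2 * s ^ card W \<le> 1"
  shows "(\<Sum>D | D \<subseteq> W \<and> D \<noteq> {} \<and> D \<noteq> W. (s ^ 2) ^ (card D * card (W - D)))
    \<le> real (card W) ^ 2 * s ^ card W"
proof -
  let ?n = "card W"
  have ns: "real ?n * s ^ ?n \<le> 1"
    using times_power_le_square_times_power[OF s(1), of ?n] small by linarith
  have "(\<Sum>D | D \<subseteq> W \<and> D \<noteq> {} \<and> D \<noteq> W. (s ^ 2) ^ (card D * card (W - D)))
    = (\<Sum>D | D \<subseteq> W \<and> D \<noteq> {} \<and> D \<noteq> W. (\<lambda>k. (s ^ 2) ^ (k * (?n - k))) (card D))"
    using W by (intro sum.cong) (auto simp: card_Diff_subset finite_subset)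
  also have "\<dots> = (\<Sum>k = 1..<?n. real (?n choose k) * (s ^ 2) ^ (k * (?n - k)))"
    by (rule sum_proper_subsets_card[OF W])
  also have "\<dots> \<le> (\<Sum>k = 1..<?n. real ?n * s ^ ?n)"
    by (rule sum_mono) (auto intro: binomial_times_cut_power_le[OF s _ _ ns])
  also have "\<dots> = real (?n - 1) * (real ?n * s ^ ?n)" by simp
  also have "\<dots> \<le> real ?n * (real ?n * s ^ ?n)"
    using s by (intro mult_right_mono) auto
  finally show ?thesis by (simp add: power2_eq_square mult.assoc)
qed

text \<open>In the recurrence for \<open>rel_complete q W\<close> the term \<open>C = W\<close> is \<open>rel_complete q W\<close> itself and
  every other term carries at least \<open>card W - 1\<close> failed cut edges.\<close>
lemma rel_complete_near_one:
  fixes s q M :: real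
  assumes W: "finite W" "W \<noteq> {}" and s: "0 \<le> s" "s \<le> 1" and q: "\<bar>q\<bar> \<le> s ^ 2"
    and small: "real (card W) ^ 2 * s ^ card W \<le> 1"
    and M: "0 \<le> M" "\<And>C. C \<subset> W \<Longrightarrow> \<bar>rel_complete q C\<bar> \<le> M"
  shows "\<bar>rel_complete q W - 1\<bar> \<le> M * (real (card W) ^ 2 * s ^ card W)"
proof -
  obtain u where u: "u \<in> W" using W(2) by blast
  let ?T = "{C. u \<in> C \<and> C \<subseteq> W} - {W}"
  let ?P = "{D. D \<subseteq> W \<and> D \<noteq> {} \<and> D \<noteq> W}"
  let ?f = "\<lambda>C. q ^ (card C * card (W - C)) * rel_complete q C"
  have fin: "finite {C. u \<in> C \<and> C \<subseteq> W}" using W(1) by (auto intro: finite_subset[of _ "Pow W"])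
  have "(\<Sum>C | u \<in> C \<and> C \<subseteq> W. ?f C) = ?f W + (\<Sum>C\<in>?T. ?f C)"
    using u by (intro sum.remove[OF fin]) auto
  then have eq: "rel_complete q W - 1 = - (\<Sum>C\<in>?T. ?f C)"
    using rel_complete_recurrence[OF W(1) u, of q] by simp
  have term_le: "\<bar>?f C\<bar> \<le> M * (s ^ 2) ^ (card C * card (W - C))" if "C \<in> ?T" for C
  proof -
    have "\<bar>?f C\<bar> = \<bar>q\<bar> ^ (card C * card (W - C)) * \<bar>rel_complete q C\<bar>"
      by (simp add: abs_mult power_abs)
    also have "\<dots> \<le> (s ^ 2) ^ (card C * card (W - C)) * M"
      using that by (intro mult_mono power_mono q M(2)) auto
    finally show ?thesis by (simp add: mult.commute)
  qed
  have "\<bar>rel_complete q W - 1\<bar> \<le> (\<Sum>C\<in>?T. \<bar>?f C\<bar>)"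
    unfolding eq abs_minus_cancel by (rule sum_abs)
  also have "\<dots> \<le> (\<Sum>C\<in>?T. M * (s ^ 2) ^ (card C * card (W - C)))"
    by (rule sum_mono) (rule term_le)
  also have "\<dots> \<le> (\<Sum>C\<in>?P. M * (s ^ 2) ^ (card C * card (W - C)))"
    using W(1) M(1) by (intro sum_mono2) (auto intro: finite_subset[of _ "Pow W"])
  also have "\<dots> \<le> M * (real (card W) ^ 2 * s ^ card W)"
    unfolding sum_distrib_left[symmetric] by (rule mult_left_mono[OF cut_power_sum_le[OF W(1) s small] M(1)])
  finally show ?thesis .
qed

lemma square_times_power_tendsto_zero:
  fixes s :: real
  assumes "0 \<le> s" "s < 1"
  shows "(\<lambda>n. real n ^ 2 * s ^ n) \<longlonglongrightarrow> 0"
proof -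
  have "norm (sqrt s) < 1" using assms by simp
  from powser_times_n_limit_0[OF this]
  have "(\<lambda>n. (real n * sqrt s ^ n) * (real n * sqrt s ^ n)) \<longlonglongrightarrow> 0"
    using tendsto_mult by fastforce
  moreover have "(real n * sqrt s ^ n) * (real n * sqrt s ^ n) = real n ^ 2 * s ^ n" for n
    using assms by (simp add: power2_eq_square power_mult_distrib[symmetric] algebra_simps)
  ultimately show ?thesis by simp
qed

text \<open>Below size \<open>n\<^sub>0\<close> the crude bound \<open>3 ^ (n\<^sub>0 ^ 2)\<close> applies; from \<open>n\<^sub>0\<close> on, where
  \<open>n\<^sup>2 s\<^sup>n \<le> 1/2\<close>, the bound propagates by induction through \<open>rel_complete_near_one\<close>.\<close>
lemma rel_complete_uniformly_bounded:
  fixes s :: real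
  assumes s: "0 \<le> s" "s < 1"
  obtains M where "3 \<le> M" "\<And>q W. \<bar>q\<bar> \<le> s ^ 2 \<Longrightarrow> finite W \<Longrightarrow> \<bar>rel_complete q W\<bar> \<le> M"
proof -
  obtain n0 where n0: "\<And>n. n0 \<le> n \<Longrightarrow> real n ^ 2 * s ^ n \<le> 1 / 2"
    using LIMSEQ_D[OF square_times_power_tendsto_zero[OF s], of "1 / 2"] by fastforce
  define M :: real where "M = max 3 (3 ^ (n0 ^ 2))"
  have "\<bar>rel_complete q W\<bar> \<le> M" if q: "\<bar>q\<bar> \<le> s ^ 2" and "finite W" for q W
    using \<open>finite W\<close>
  proof (induction "card W" arbitrary: W rule: less_induct)
    case less
    show ?case
    proof (cases "card W \<le> n0")
      case True
      have "\<bar>q\<bar> \<le> 1" using q s power_le_one[of s 2] by linarith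
      then have "\<bar>rel_complete q W\<bar> \<le> 3 ^ (card W ^ 2)"
        by (rule abs_rel_complete_le[OF less.prems])
      also have "\<dots> \<le> 3 ^ (n0 ^ 2)"
        using True by (intro power_increasing power_mono) auto
      finally show ?thesis unfolding M_def by linarith
    next
      case False
      then have W: "W \<noteq> {}" and small: "real (card W) ^ 2 * s ^ card W \<le> 1 / 2"
        using n0 by auto
      have IH: "\<bar>rel_complete q C\<bar> \<le> M" if "C \<subset> W" for C
      proof -
        have "finite C" "card C < card W"
          using less.prems that finite_subset psubset_card_mono by auto
        then show ?thesis using less.hyps by blast
      qed
      have "\<bar>rel_complete q W - 1\<bar> \<le> M * (real (card W) ^ 2 * s ^ card W)"
        using small s by (intro rel_complete_near_one[OF less.prems W _ _ q _ _ IH]) (auto simp: M_def)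
      also have "\<dots> \<le> M * (1 / 2)"
        using small by (intro mult_left_mono) (auto simp: M_def)
      finally have "\<bar>rel_complete q W - 1\<bar> \<le> M * (1 / 2)" .
      then show ?thesis unfolding M_def by linarith
    qed
  qed
  moreover have "3 \<le> M" unfolding M_def by simp
  ultimately show ?thesis using that by blast
qed

lemma rel_complete_near_one_bounded:
  fixes s q M :: real and W :: "'a set"
  assumes "finite W" "W \<noteq> {}" "0 \<le> s" "s \<le> 1" "\<bar>q\<bar> \<le> s ^ 2"
    "real (card W) ^ 2 * s ^ card W \<le> 1" "0 \<le> M"
    and bounded: "\<And>C :: 'a set. finite C \<Longrightarrow> \<bar>rel_complete q C\<bar> \<le> M"
  shows "\<bar>rel_complete q W - 1\<bar> \<le> M * (real (card W) ^ 2 * s ^ card W)"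
proof (rule rel_complete_near_one[OF assms(1-7)])
  show "\<bar>rel_complete q C\<bar> \<le> M" if "C \<subset> W" for C
    using bounded[of C] that finite_subset[of C W] assms(1) by auto
qed

lemma abs_split_cross_sum_le:
  fixes s q M :: real and W :: "'a set"
  assumes W: "finite W" and s: "0 \<le> s" "s \<le> 1" and q: "\<bar>q\<bar> \<le> s ^ 2"
    and small: "real (card W) ^ 2 * s ^ card W \<le> 1"
    and M: "0 \<le> M" "\<And>C :: 'a set. finite C \<Longrightarrow> \<bar>rel_complete q C\<bar> \<le> M"
  shows "\<bar>\<Sum>D | D \<subseteq> W \<and> D \<noteq> {} \<and> D \<noteq> W.
      q ^ (card D * card (W - D)) * rel_complete q (insert u D) * rel_complete q (insert v (W - D))\<bar>
    \<le> M ^ 2 * (real (card W) ^ 2 * s ^ card W)"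
proof -
  have "\<bar>q ^ (card D * card (W - D)) * rel_complete q (insert u D) * rel_complete q (insert v (W - D))\<bar>
      \<le> M ^ 2 * (s ^ 2) ^ (card D * card (W - D))" if "D \<subseteq> W" for D
  proof -
    have "finite (insert u D)" "finite (insert v (W - D))" using W that finite_subset by auto
    then have RR: "\<bar>rel_complete q (insert u D) * rel_complete q (insert v (W - D))\<bar> \<le> M ^ 2"
      unfolding abs_mult power2_eq_square using M by (intro mult_mono) auto
    have Q: "\<bar>q ^ (card D * card (W - D))\<bar> \<le> (s ^ 2) ^ (card D * card (W - D))"
      unfolding power_abs by (rule power_mono[OF q]) simp
    have "\<bar>q ^ (card D * card (W - D)) * (rel_complete q (insert u D) * rel_complete q (insert v (W - D)))\<bar>
        \<le> (s ^ 2) ^ (card D * card (W - D)) * M ^ 2"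
      unfolding abs_mult[of "q ^ _"] by (rule mult_mono[OF Q RR]) auto
    then show ?thesis by (simp only: mult.assoc mult.commute[of "M ^ 2"])
  qed
  then have "\<bar>\<Sum>D | D \<subseteq> W \<and> D \<noteq> {} \<and> D \<noteq> W.
      q ^ (card D * card (W - D)) * rel_complete q (insert u D) * rel_complete q (insert v (W - D))\<bar>
    \<le> (\<Sum>D | D \<subseteq> W \<and> D \<noteq> {} \<and> D \<noteq> W. M ^ 2 * (s ^ 2) ^ (card D * card (W - D)))"
    by (intro order_trans[OF sum_abs sum_mono]) auto
  also have "\<dots> \<le> M ^ 2 * (real (card W) ^ 2 * s ^ card W)"
    unfolding sum_distrib_left[symmetric] by (intro mult_left_mono cut_power_sum_le W s small) simp
  finally show ?thesis .
qed

lemma split_cofactor_bounds: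
  fixes q s M :: real and W :: "'a set"
  assumes W: "finite W" "W \<noteq> {}" "u \<notin> W" "v \<notin> W"
    and s: "0 \<le> s" "s \<le> 1" and q: "\<bar>q\<bar> \<le> s ^ 2"
    and M: "1 \<le> M" "\<And>C :: 'a set. finite C \<Longrightarrow> \<bar>rel_complete q C\<bar> \<le> M"
    and small: "M * (real (card W + 1) ^ 2 * s ^ (card W + 1)) \<le> 1 / 4"
      "M ^ 2 * (real (card W) ^ 2 * s ^ card W) \<le> 1 / 2"
  shows "1 \<le> split_cofactor q u v W" "split_cofactor q u v W \<le> 2 * M + 1"
proof -
  have "1 \<le> M ^ 2" using M(1) by (simp add: one_le_power)
  then have M_mult: "x \<le> M * x" "x \<le> M ^ 2 * x" if "0 \<le> x" for x :: real
    using M(1) that by (simp_all add: mult_le_cancel_right1)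
  have "0 \<le> real (card W + 1) ^ 2 * s ^ (card W + 1)" "0 \<le> real (card W) ^ 2 * s ^ card W"
    using s(1) by simp_all
  from M_mult(1)[OF this(1)] M_mult(2)[OF this(2)]
  have g: "real (card W + 1) ^ 2 * s ^ (card W + 1) \<le> 1" "real (card W) ^ 2 * s ^ card W \<le> 1"
    using small by linarith+
  have near: "\<bar>rel_complete q (insert w W) - 1\<bar> \<le> 1 / 4" if "w \<notin> W" for w
  proof -
    have card: "card (insert w W) = card W + 1" using W(1) that by simp
    have "\<bar>rel_complete q (insert w W) - 1\<bar> \<le> M * (real (card W + 1) ^ 2 * s ^ (card W + 1))"
      using rel_complete_near_one_bounded[of "insert w W" s q M] W(1) s q M g(1) unfolding card by auto
    then show ?thesis using small(1) by linarith
  qed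
  have cross: "\<bar>\<Sum>D | D \<subseteq> W \<and> D \<noteq> {} \<and> D \<noteq> W.
      q ^ (card D * card (W - D)) * rel_complete q (insert u D) * rel_complete q (insert v (W - D))\<bar>
    \<le> 1 / 2"
    using abs_split_cross_sum_le[OF W(1) s q g(2) _ M(2), of u v] M(1) small(2) by linarith
  show "1 \<le> split_cofactor q u v W"
    using near[OF W(3)] near[OF W(4)] cross unfolding split_cofactor_def by linarith
  show "split_cofactor q u v W \<le> 2 * M + 1"
    using M(2)[of "insert u W"] M(2)[of "insert v W"] W(1) cross
    unfolding split_cofactor_def by (simp add: abs_le_iff) linarith
qed

section \<open>The graphs \<open>H\<^sub>N\<close>\<close>

lemma Hn_E_eq_complete_edges: "Hn_E n = complete_edges {0..<n} - {{0, 1}}"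
proof (rule set_eqI, rule iffI)
  fix e assume "e \<in> Hn_E n"
  then obtain i j where "e = {i, j}" "i < j" "j < n" "\<not> (i = 0 \<and> j = 1)"
    unfolding Hn_E_def by blast
  then show "e \<in> complete_edges {0..<n} - {{0, 1}}"
    by (auto simp: doubleton_in_complete_edges_iff doubleton_eq_iff)
next
  fix e assume e: "e \<in> complete_edges {0..<n} - {{0, 1}}"
  then obtain i j where ij: "e = {i, j}" "i < n" "j < n" "i \<noteq> j"
    unfolding complete_edges_def by auto
  show "e \<in> Hn_E n"
  proof (cases "i < j")
    case True
    then show ?thesis using e ij unfolding Hn_E_def by auto
  next
    case False
    then have "e = {j, i}" "j < i" using ij by auto
    then show ?thesis using e ij unfolding Hn_E_def by auto
  qed
qed

lemma S_H_eq_split_cofactor: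
  assumes "3 \<le> N" "q \<noteq> 0"
  shows "S_H N q = q ^ (N - 2) * split_cofactor q 0 1 {2..<N}"
proof -
  have "q * S_H N q = subgraph_prob q (complete_edges {0..<N}) (\<lambda>A. spanning_split {0..<N} A 0 1)"
    unfolding S_H_def Hn_V_def Hn_E_eq_complete_edges using assms by (intro SplitRel_delete_edge) auto
  also have "\<dots> = q ^ (N - 2 + 1) * split_cofactor q 0 1 {2..<N}"
  proof -
    have V: "{0..<N} = insert 0 (insert 1 {2..<N})" using assms(1) by auto
    show ?thesis
      unfolding V using subgraph_prob_spanning_split_cofactor[of "{2..<N}" 0 1 q] assms(1) by simp
  qed
  finally show ?thesis using assms(2) by simp
qed

lemma yhat_H_eq:
  assumes "2 \<le> N" "S_H N q \<noteq> 0"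
  shows "yhat_H N q = rel_complete q {0..<N} / S_H N q + q"
proof -
  have "rel_complete q {0..<N} = Rel {0..<N} (Hn_E N) q + (1 - q) * S_H N q"
    unfolding S_H_def Hn_V_def Hn_E_eq_complete_edges using assms(1) by (intro rel_complete_delete_edge) auto
  then show ?thesis
    using assms(2) unfolding yhat_H_def yhat_def S_H_def Hn_V_def by (simp add: field_simps)
qed

context
  fixes N :: nat and q s M :: real
  assumes N: "odd N" "5 \<le> N" and q: "q < 0" "\<bar>q\<bar> \<le> s ^ 2" and s: "0 \<le> s" "s \<le> 1"
    and M: "3 \<le> M" "\<And>C :: nat set. finite C \<Longrightarrow> \<bar>rel_complete q C\<bar> \<le> M"
    and small: "\<And>n. N - 2 \<le> n \<Longrightarrow> M ^ 2 * (real n ^ 2 * s ^ n) \<le> 1 / 8"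
begin

lemma square_times_power_small:
  assumes "N - 2 \<le> n"
  shows "real n ^ 2 * s ^ n \<le> 1 / 32" "M * (real n ^ 2 * s ^ n) \<le> 1 / 16"
proof -
  have g: "0 \<le> real n ^ 2 * s ^ n" using s(1) by simp
  have "4 * (real n ^ 2 * s ^ n) \<le> M ^ 2 * (real n ^ 2 * s ^ n)"
    using M(1) power_mono[of 2 M 2] by (intro mult_right_mono g) auto
  then show "real n ^ 2 * s ^ n \<le> 1 / 32" using small[OF assms] by linarith
  have "2 * (M * (real n ^ 2 * s ^ n)) \<le> M * (M * (real n ^ 2 * s ^ n))"
    using M(1) g by (intro mult_right_mono) auto
  then show "M * (real n ^ 2 * s ^ n) \<le> 1 / 16"
    using small[OF assms] by (simp add: power2_eq_square mult.assoc)
qed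

lemma S_H_bounds: "S_H N q < 0" "- S_H N q \<le> 1 / 4"
proof -
  let ?W = "{2..<N}" and ?X = "split_cofactor q 0 1 {2..<N}"
  have W: "finite ?W" "?W \<noteq> {}" "0 \<notin> ?W" "1 \<notin> ?W" using N(2) by auto
  have "card ?W + 1 = N - 1" using N(2) by simp
  then have "M * (real (card ?W + 1) ^ 2 * s ^ (card ?W + 1)) \<le> 1 / 4"
    "M ^ 2 * (real (card ?W) ^ 2 * s ^ card ?W) \<le> 1 / 2"
    using square_times_power_small(2)[of "N - 1"] small[of "N - 2"] by simp_all
  then have X: "1 \<le> ?X" "?X \<le> 2 * M + 1"
    using split_cofactor_bounds[OF W s q(2) _ M(2)] M(1) by simp_all
  have S: "S_H N q = q ^ (N - 2) * ?X"
    using N q by (intro S_H_eq_split_cofactor) auto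
  have "odd (N - 2)" using N by simp
  then have "q ^ (N - 2) < 0" using q(1) by simp
  then show S_neg: "S_H N q < 0" unfolding S using X(1) by (simp add: mult_neg_pos)
  have "\<bar>q ^ (N - 2)\<bar> \<le> s ^ (N - 2)"
    using power_mono[OF q(2), of "N - 2"] power_decreasing[of "N - 2" "2 * (N - 2)" s] s
    by (simp add: power_abs power_mult[symmetric])
  moreover have "- S_H N q = \<bar>q ^ (N - 2)\<bar> * ?X"
    using S_neg X(1) unfolding S by (simp add: abs_mult abs_of_neg[symmetric])
  ultimately have "- S_H N q \<le> s ^ (N - 2) * (2 * M + 1)"
    using X by (simp add: mult_mono)
  also have "\<dots> \<le> M ^ 2 * (real (N - 2) ^ 2 * s ^ (N - 2))"
  proof -
    have "3 * M \<le> M * M" using M(1) by (intro mult_right_mono) auto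
    then have "2 * M + 1 \<le> M ^ 2" using M(1) unfolding power2_eq_square by linarith
    moreover have "(1::real) \<le> real (N - 2)" using N(2) by simp
    then have "M ^ 2 * 1 \<le> M ^ 2 * real (N - 2) ^ 2"
      by (intro mult_left_mono one_le_power) simp_all
    ultimately have "s ^ (N - 2) * (2 * M + 1) \<le> s ^ (N - 2) * (M ^ 2 * real (N - 2) ^ 2)"
      using s(1) by (intro mult_left_mono) simp_all
    then show ?thesis by (simp add: ac_simps)
  qed
  finally show "- S_H N q \<le> 1 / 4" using small[of "N - 2"] by simp
qed

lemma rel_complete_ge_half: "1 / 2 \<le> rel_complete q {0..<N}"
proof -
  have "\<bar>rel_complete q {0..<N} - 1\<bar> \<le> M * (real (card {0..<N}) ^ 2 * s ^ card {0..<N})"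
    using N(2) M(1) square_times_power_small(1)[of N]
    by (intro rel_complete_near_one_bounded[OF _ _ s q(2) _ _ M(2)]) auto
  then show ?thesis using square_times_power_small(2)[of N] by simp
qed

lemma S_H_neg_and_yhat_H_less: "S_H N q < 0 \<and> yhat_H N q < -1"
proof -
  have "rel_complete q {0..<N} / S_H N q \<le> -2"
    using rel_complete_ge_half S_H_bounds by (simp add: divide_le_eq)
  then show ?thesis
    using yhat_H_eq[of N q] S_H_bounds(1) N q(1) by simp
qed

end

lemma compact_subset_interval_abs_bound:
  fixes K :: "real set"
  assumes "compact K" "K \<subseteq> {-1<..<0}"
  obtains s where "0 \<le> s" "s < 1" "\<And>q. q \<in> K \<Longrightarrow> \<bar>q\<bar> \<le> s ^ 2"
proof (cases "K = {}")
  case True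
  then show ?thesis using that[of 0] by simp
next
  case False
  obtain a where a: "a \<in> K" "\<And>q. q \<in> K \<Longrightarrow> a \<le> q"
    using compact_attains_inf[OF assms(1) False] by blast
  then have "-1 < a" "a < 0" using assms(2) by auto
  moreover have "\<bar>q\<bar> \<le> - a" if "q \<in> K" for q
    using a(2)[OF that] that assms(2) by auto
  ultimately show ?thesis by (intro that[of "sqrt (- a)"]) auto
qed

theorem proposition3p1:
  fixes K :: "real set"
  assumes "compact K" and "K \<subseteq> {-1<..<0}"
  shows "\<exists>N::nat. N \<ge> 3 \<and> (\<forall>q\<in>K. S_H N q \<noteq> 0 \<and> yhat_H N q < -1)"
proof -
  obtain s where s: "0 \<le> s" "s < 1" "\<And>q. q \<in> K \<Longrightarrow> \<bar>q\<bar> \<le> s ^ 2"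
    using compact_subset_interval_abs_bound[OF assms] by blast
  obtain M where M: "3 \<le> M"
    "\<And>q (W :: nat set). \<bar>q\<bar> \<le> s ^ 2 \<Longrightarrow> finite W \<Longrightarrow> \<bar>rel_complete q W\<bar> \<le> M"
    using rel_complete_uniformly_bounded[OF s(1,2)] by blast
  have "(\<lambda>n. M ^ 2 * (real n ^ 2 * s ^ n)) \<longlonglongrightarrow> 0"
    using tendsto_mult_right_zero[OF square_times_power_tendsto_zero[OF s(1,2)]] by simp
  then obtain N0 where N0: "\<And>n. N0 \<le> n \<Longrightarrow> M ^ 2 * (real n ^ 2 * s ^ n) \<le> 1 / 8"
    using LIMSEQ_D[of _ 0 "1 / 8"] by fastforce
  define N where "N = 2 * N0 + 5"
  have "S_H N q < 0 \<and> yhat_H N q < -1" if q: "q \<in> K" for q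
  proof (rule S_H_neg_and_yhat_H_less)
    show "odd N" "5 \<le> N" "q < 0" "\<bar>q\<bar> \<le> s ^ 2" "0 \<le> s" "s \<le> 1" "3 \<le> M"
      using q assms(2) s M(1) by (auto simp: N_def)
    show "\<bar>rel_complete q C\<bar> \<le> M" if "finite C" for C :: "nat set"
      by (rule M(2)[OF s(3)[OF q] that])
    show "M ^ 2 * (real n ^ 2 * s ^ n) \<le> 1 / 8" if "N - 2 \<le> n" for n
      using N0 that by (simp add: N_def)
  qed
  then show ?thesis by (intro exI[of _ N]) (force simp: N_def)
qed

end
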